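(* Let $\Gamma\curvearrowright^{\sigma}(X,\mu)$ be a probability measure preserving action of a countable group $\Gamma$ with spectral gap. Then the natural homomorphism $\mathrm H^1(\Gamma,\mathrm L^2(X,\mathbb R))\to\mathrm H^1(\Gamma,\mathrm L^0(X,\mathbb R))$ is injective.
   Context: $\Gamma$ acts on functions by $\sigma_g(f)(x)=f(g^{-1}x)$. The action has spectral gap if the Koopman representation on $\mathrm L^2(X,\mu)\ominus\mathbb C1$ has no almost invariant vectors; equivalently there are finite $F\subset\Gamma$ and $C>0$ with $\|\xi-\int\xi\,d\mu\|_2\le C\max_{g\in F}\|\sigma_g(\xi)-\xi\|_2$ for all $\xi\in\mathrm L^2(X)$. $\mathrm H^1(\Gamma,\mathcal A)$ is the group of 1-cocycles $c(gh)=c(g)+\sigma_g(c(h))$ modulo 1-coboundaries $c(g)=\sigma_g(b)-b$, $b\in\mathcal A$; $\mathrm L^0(X,\mathbb R)$ denotes a.e.-classes of measurable real functions. *)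

theory Defs
  imports "HOL-Probability.Probability" "HOL-Algebra.Group"
begin

definition pmp_action :: "('g, 'b) monoid_scheme \<Rightarrow> 'a measure \<Rightarrow> ('g \<Rightarrow> 'a \<Rightarrow> 'a) \<Rightarrow> bool" where
  "pmp_action G M T \<longleftrightarrow>
     group G \<and> prob_space M \<and>
     (\<forall>g\<in>carrier G. T g \<in> measurable M M \<and> distr M M (T g) = M) \<and>
     (\<forall>x\<in>space M. T \<one>\<^bsub>G\<^esub> x = x) \<and>
     (\<forall>g\<in>carrier G. \<forall>h\<in>carrier G. \<forall>x\<in>space M. T (g \<otimes>\<^bsub>G\<^esub> h) x = T g (T h x))"

definition koopman :: "('g, 'b) monoid_scheme \<Rightarrow> ('g \<Rightarrow> 'a \<Rightarrow> 'a) \<Rightarrow> 'g \<Rightarrow> ('a \<Rightarrow> 'c) \<Rightarrow> ('a \<Rightarrow> 'c)" where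
  "koopman G T g f = (\<lambda>x. f (T (inv\<^bsub>G\<^esub> g) x))"

definition square_integrable :: "'a measure \<Rightarrow> ('a \<Rightarrow> 'c::real_normed_vector) \<Rightarrow> bool" where
  "square_integrable M f \<longleftrightarrow> f \<in> borel_measurable M \<and> integrable M (\<lambda>x. (norm (f x))\<^sup>2)"

text \<open>Spectral gap: the Koopman representation on L^2(X) \<ominus> C1 (complex L^2) has no
  almost invariant vectors, i.e. there is no sequence of unit vectors orthogonal to the
  constants which is asymptotically invariant under every group element.\<close>
definition spectral_gap :: "('g, 'b) monoid_scheme \<Rightarrow> 'a measure \<Rightarrow> ('g \<Rightarrow> 'a \<Rightarrow> 'a) \<Rightarrow> bool" where
  "spectral_gap G M T \<longleftrightarrow>
     \<not> (\<exists>\<xi> :: nat \<Rightarrow> 'a \<Rightarrow> complex.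
          (\<forall>n. square_integrable M (\<xi> n) \<and>
               (\<integral>x. (cmod (\<xi> n x))\<^sup>2 \<partial>M) = 1 \<and>
               (\<integral>x. \<xi> n x \<partial>M) = 0) \<and>
          (\<forall>g\<in>carrier G.
             (\<lambda>n. \<integral>x. (cmod (koopman G T g (\<xi> n) x - \<xi> n x))\<^sup>2 \<partial>M) \<longlonglongrightarrow> 0))"

definition cocycle_eq :: "('g, 'b) monoid_scheme \<Rightarrow> 'a measure \<Rightarrow> ('g \<Rightarrow> 'a \<Rightarrow> 'a) \<Rightarrow> ('g \<Rightarrow> 'a \<Rightarrow> real) \<Rightarrow> bool" where
  "cocycle_eq G M T c \<longleftrightarrow>
     (\<forall>g\<in>carrier G. \<forall>h\<in>carrier G.
        AE x in M. c (g \<otimes>\<^bsub>G\<^esub> h) x = c g x + koopman G T g (c h) x)"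

definition L2_cocycle :: "('g, 'b) monoid_scheme \<Rightarrow> 'a measure \<Rightarrow> ('g \<Rightarrow> 'a \<Rightarrow> 'a) \<Rightarrow> ('g \<Rightarrow> 'a \<Rightarrow> real) \<Rightarrow> bool" where
  "L2_cocycle G M T c \<longleftrightarrow> (\<forall>g\<in>carrier G. square_integrable M (c g)) \<and> cocycle_eq G M T c"

definition L2_coboundary :: "('g, 'b) monoid_scheme \<Rightarrow> 'a measure \<Rightarrow> ('g \<Rightarrow> 'a \<Rightarrow> 'a) \<Rightarrow> ('g \<Rightarrow> 'a \<Rightarrow> real) \<Rightarrow> bool" where
  "L2_coboundary G M T c \<longleftrightarrow>
     (\<exists>b. square_integrable M b \<and>
          (\<forall>g\<in>carrier G. AE x in M. c g x = koopman G T g b x - b x))"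

definition L0_coboundary :: "('g, 'b) monoid_scheme \<Rightarrow> 'a measure \<Rightarrow> ('g \<Rightarrow> 'a \<Rightarrow> 'a) \<Rightarrow> ('g \<Rightarrow> 'a \<Rightarrow> real) \<Rightarrow> bool" where
  "L0_coboundary G M T c \<longleftrightarrow>
     (\<exists>b. b \<in> borel_measurable M \<and>
          (\<forall>g\<in>carrier G. AE x in M. c g x = koopman G T g b x - b x))"

end

theory Submission
  imports Defs
begin

text \<open>Let \<open>b\<close> be measurable with \<open>\<sigma>\<^sub>g(b) - b = c(g) \<in> L\<^sup>2\<close>. Truncating \<open>b\<close> at height \<open>N\<close> is
  \<open>1\<close>-Lipschitz and commutes with \<open>\<sigma>\<^sub>g\<close>, so \<open>\<parallel>\<sigma>\<^sub>g(b\<^sub>N) - b\<^sub>N\<parallel>\<^sub>2 \<le> \<parallel>c(g)\<parallel>\<^sub>2\<close>, and the Poincare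
  inequality given by the spectral gap bounds the variances of the bounded functions \<open>b\<^sub>N\<close>
  uniformly in \<open>N\<close>. As \<open>b\<close> is finite a.e., Chebyshev's inequality keeps the means of the
  \<open>b\<^sub>N\<close> bounded too; along a subsequence they converge to some \<open>m\<close>, and Fatou's lemma puts
  \<open>b - m\<close> into \<open>L\<^sup>2\<close>. Then \<open>c(g) = \<sigma>\<^sub>g(b - m) - (b - m)\<close> is an \<open>L\<^sup>2\<close>-coboundary.\<close>

definition koopman_displacement ::
    "('g, 'b) monoid_scheme \<Rightarrow> 'a measure \<Rightarrow> ('g \<Rightarrow> 'a \<Rightarrow> 'a) \<Rightarrow> 'g \<Rightarrow> ('a \<Rightarrow> real) \<Rightarrow> real" where
  "koopman_displacement G M T g f = (\<integral>x. (koopman G T g f x - f x)\<^sup>2 \<partial>M)"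

definition truncation :: "real \<Rightarrow> real \<Rightarrow> real" where
  "truncation N t = max (- N) (min N t)"

lemma abs_truncation_le: "\<bar>truncation N t\<bar> \<le> \<bar>N\<bar>"
  unfolding truncation_def max_def min_def by auto

lemma truncation_eq: "\<bar>t\<bar> \<le> N \<Longrightarrow> truncation N t = t"
  by (simp add: truncation_def)

lemma abs_truncation_diff_le: "\<bar>truncation N u - truncation N v\<bar> \<le> \<bar>u - v\<bar>"
  unfolding truncation_def max_def min_def by auto

lemma borel_measurable_truncation [measurable]:
  "f \<in> borel_measurable M \<Longrightarrow> (\<lambda>x. truncation N (f x)) \<in> borel_measurable M"
  unfolding truncation_def by (intro borel_measurable_max borel_measurable_min) auto

lemma square_integrable_real_iff:
  "square_integrable M (f :: 'a \<Rightarrow> real) \<longleftrightarrow> f \<in> borel_measurable M \<and> integrable M (\<lambda>x. (f x)\<^sup>2)"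
  by (simp add: square_integrable_def)

lemma square_integrable_diff:
  fixes f g :: "'a \<Rightarrow> real"
  assumes "square_integrable M f" "square_integrable M g"
  shows "square_integrable M (\<lambda>x. f x - g x)"
proof -
  have f [measurable]: "f \<in> borel_measurable M" and g [measurable]: "g \<in> borel_measurable M"
    using assms by (auto simp: square_integrable_real_iff)
  have "integrable M (\<lambda>x. 2 * (f x)\<^sup>2 + 2 * (g x)\<^sup>2)"
    using assms by (auto simp: square_integrable_real_iff)
  moreover have "(\<lambda>x. (f x - g x)\<^sup>2) \<in> borel_measurable M"
    by measurable
  moreover have "AE x in M. norm ((f x - g x)\<^sup>2) \<le> norm (2 * (f x)\<^sup>2 + 2 * (g x)\<^sup>2)"
  proof (rule AE_I2)
    fix x
    have "(f x - g x)\<^sup>2 \<le> 2 * (f x)\<^sup>2 + 2 * (g x)\<^sup>2"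
      using zero_le_power2[of "f x + g x"] by (simp add: power2_diff power2_sum)
    then show "norm ((f x - g x)\<^sup>2) \<le> norm (2 * (f x)\<^sup>2 + 2 * (g x)\<^sup>2)"
      by simp
  qed
  ultimately have "integrable M (\<lambda>x. (f x - g x)\<^sup>2)"
    by (rule Bochner_Integration.integrable_bound)
  then show ?thesis
    by (simp add: square_integrable_real_iff)
qed

lemma (in finite_measure) square_integrable_bounded:
  fixes f :: "'a \<Rightarrow> real"
  assumes [measurable]: "f \<in> borel_measurable M" and "\<And>x. x \<in> space M \<Longrightarrow> \<bar>f x\<bar> \<le> B"
  shows "square_integrable M f"
proof -
  have "AE x in M. norm ((f x)\<^sup>2) \<le> B\<^sup>2"
    using power_mono[OF assms(2) abs_ge_zero, of _ 2] by (intro AE_I2) simp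
  then have "integrable M (\<lambda>x. (f x)\<^sup>2)"
    by (rule integrable_const_bound) measurable
  then show ?thesis
    by (simp add: square_integrable_real_iff)
qed

lemma (in finite_measure) square_integrable_truncation:
  "f \<in> borel_measurable M \<Longrightarrow> square_integrable M (\<lambda>x. truncation N (f x))"
  by (rule square_integrable_bounded[where B = "\<bar>N\<bar>"]) (simp_all add: abs_truncation_le)

lemma square_integrable_pointwise_limit:
  fixes f :: "nat \<Rightarrow> 'a \<Rightarrow> real"
  assumes [measurable]: "\<And>k. f k \<in> borel_measurable M" "g \<in> borel_measurable M"
    and lim: "\<And>x. x \<in> space M \<Longrightarrow> (\<lambda>k. f k x) \<longlonglongrightarrow> g x"
    and int: "\<And>k. integrable M (\<lambda>x. (f k x)\<^sup>2)"
    and bound: "\<And>k. (\<integral>x. (f k x)\<^sup>2 \<partial>M) \<le> K"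
  shows "square_integrable M g"
proof -
  have "(\<integral>\<^sup>+x. (g x)\<^sup>2 \<partial>M) = (\<integral>\<^sup>+x. liminf (\<lambda>k. ennreal ((f k x)\<^sup>2)) \<partial>M)"
    using lim by (intro nn_integral_cong lim_imp_Liminf[symmetric] tendsto_ennrealI tendsto_power) auto
  also have "\<dots> \<le> liminf (\<lambda>k. \<integral>\<^sup>+x. (f k x)\<^sup>2 \<partial>M)"
    by (rule nn_integral_liminf) measurable
  also have "\<dots> \<le> K"
  proof (rule Liminf_le)
    show "\<forall>\<^sub>F k in sequentially. (\<integral>\<^sup>+x. (f k x)\<^sup>2 \<partial>M) \<le> K"
      using int bound by (simp add: nn_integral_eq_integral ennreal_leI)
  qed simp
  also have "\<dots> < \<infinity>"
    by simp
  finally have "integrable M (\<lambda>x. (g x)\<^sup>2)"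
    by (intro integrableI_nonneg) auto
  then show ?thesis
    by (simp add: square_integrable_real_iff)
qed

lemma koopman_displacement_nonneg: "0 \<le> koopman_displacement G M T g f"
  unfolding koopman_displacement_def by (rule integral_nonneg_AE) simp

lemma koopman_displacement_truncation_le:
  assumes "AE x in M. c x = koopman G T g b x - b x" and "integrable M (\<lambda>x. (c x)\<^sup>2)"
  shows "koopman_displacement G M T g (\<lambda>x. truncation N (b x)) \<le> (\<integral>x. (c x)\<^sup>2 \<partial>M)"
  unfolding koopman_displacement_def
proof (rule integral_mono_AE'[OF assms(2)])
  show "AE x in M. (koopman G T g (\<lambda>x. truncation N (b x)) x - truncation N (b x))\<^sup>2 \<le> (c x)\<^sup>2"
    using assms(1) by eventually_elim
      (simp add: koopman_def abs_truncation_diff_le flip: abs_le_square_iff)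
qed simp

context prob_space
begin

lemma tendsto_prob_abs_le:
  fixes b :: "'a \<Rightarrow> real"
  assumes [measurable]: "b \<in> borel_measurable M"
  shows "(\<lambda>R::nat. prob {x \<in> space M. \<bar>b x\<bar> \<le> real R}) \<longlonglongrightarrow> 1"
proof -
  have "(\<Union>R::nat. {x \<in> space M. \<bar>b x\<bar> \<le> real R}) = space M"
    using real_nat_ceiling_ge by auto
  moreover have "(\<lambda>R. prob {x \<in> space M. \<bar>b x\<bar> \<le> real R}) \<longlonglongrightarrow> prob (\<Union>R::nat. {x \<in> space M. \<bar>b x\<bar> \<le> real R})"
    by (intro finite_Lim_measure_incseq) (auto simp: incseq_def)
  ultimately show ?thesis
    by (simp add: prob_space)
qed

lemma normalized_deviation:
  fixes f :: "'a \<Rightarrow> real"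
  assumes f: "square_integrable M f" and var: "0 < variance f"
  defines "\<xi> \<equiv> \<lambda>x. (f x - expectation f) / sqrt (variance f)"
  shows "square_integrable M \<xi>" and "expectation \<xi> = 0"
    and "expectation (\<lambda>x. (\<xi> x)\<^sup>2) = 1"
    and "koopman_displacement G M T g \<xi> = koopman_displacement G M T g f / variance f"
proof -
  have sq: "(t / sqrt (variance f))\<^sup>2 = t\<^sup>2 / variance f" for t
    using var by (simp add: power_divide)
  have f_meas: "f \<in> borel_measurable M" and "integrable M (\<lambda>x. (f x)\<^sup>2)"
    using f by (auto simp: square_integrable_real_iff)
  then have f_int: "integrable M f"
    by (rule square_integrable_imp_integrable)
  have "square_integrable M (\<lambda>x. f x - expectation f)"
    using f square_integrable_bounded[of "\<lambda>_. expectation f"] by (intro square_integrable_diff) auto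
  moreover have "\<xi> \<in> borel_measurable M"
    unfolding \<xi>_def using f_meas by measurable
  ultimately show "square_integrable M \<xi>"
    unfolding square_integrable_real_iff \<xi>_def sq by simp
  show "expectation \<xi> = 0"
    using f_int unfolding \<xi>_def by (simp add: prob_space)
  show "expectation (\<lambda>x. (\<xi> x)\<^sup>2) = 1"
    using var unfolding \<xi>_def sq by simp
  have "koopman G T g \<xi> x - \<xi> x = (koopman G T g f x - f x) / sqrt (variance f)" for x
    unfolding \<xi>_def koopman_def by (simp add: diff_divide_distrib)
  then show "koopman_displacement G M T g \<xi> = koopman_displacement G M T g f / variance f"
    unfolding koopman_displacement_def by (simp add: sq)
qed

lemma bounded_truncated_variance_imp_square_integrable:
  fixes b :: "'a \<Rightarrow> real"
  assumes [measurable]: "b \<in> borel_measurable M"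
    and var: "\<And>N::nat. variance (\<lambda>x. truncation N (b x)) \<le> K"
  obtains m where "square_integrable M (\<lambda>x. b x - m)"
proof -
  define b\<^sub>N where "b\<^sub>N N = (\<lambda>x. truncation (real N) (b x))" for N
  define m\<^sub>N where "m\<^sub>N N = expectation (b\<^sub>N N)" for N
  have [measurable]: "b\<^sub>N N \<in> borel_measurable M" for N
    unfolding b\<^sub>N_def by measurable
  have b\<^sub>N_L2: "square_integrable M (\<lambda>x. b\<^sub>N N x - c)" for N c
    unfolding b\<^sub>N_def
    by (intro square_integrable_diff square_integrable_truncation square_integrable_bounded[where B = "\<bar>c\<bar>"]) auto
  have var\<^sub>N: "variance (b\<^sub>N N) \<le> K" for N
    unfolding b\<^sub>N_def by (rule var)
  then have "K \<ge> 0"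
    by (rule order.trans[OF variance_positive])
  obtain R :: nat where R: "1/2 < prob {x \<in> space M. \<bar>b x\<bar> \<le> real R}"
    using order_tendstoD(1)[OF tendsto_prob_abs_le, of b "1/2"] by (auto simp: eventually_sequentially)
  have m\<^sub>N_bound: "\<bar>m\<^sub>N N\<bar> \<le> real R + sqrt (2 * K)" if "R \<le> N" for N
  proof (rule ccontr)
    \<comment> \<open>Chebyshev: on \<open>{|b| \<le> R}\<close>, of probability \<open>> 1/2\<close>, \<open>b\<^sub>N = b\<close> is at distance at least
      \<open>|m\<^sub>N| - R\<close> from its mean \<open>m\<^sub>N\<close>.\<close>
    assume far: "\<not> ?thesis"
    define a where "a = \<bar>m\<^sub>N N\<bar> - real R"
    have "0 \<le> sqrt (2 * K)"
      using \<open>K \<ge> 0\<close> by simp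
    then have "sqrt (2 * K) < a" "0 < a"
      using far unfolding a_def by linarith+
    have "{x \<in> space M. \<bar>b x\<bar> \<le> real R} \<subseteq> {x \<in> space M. a \<le> \<bar>b\<^sub>N N x - m\<^sub>N N\<bar>}"
      using that by (auto simp: a_def b\<^sub>N_def truncation_eq)
    then have "prob {x \<in> space M. \<bar>b x\<bar> \<le> real R} \<le> prob {x \<in> space M. a \<le> \<bar>b\<^sub>N N x - m\<^sub>N N\<bar>}"
      by (rule finite_measure_mono) measurable
    with R have "1/2 < prob {x \<in> space M. a \<le> \<bar>b\<^sub>N N x - m\<^sub>N N\<bar>}"
      by linarith
    also have "\<dots> \<le> variance (b\<^sub>N N) / a\<^sup>2"
      unfolding m\<^sub>N_def using b\<^sub>N_L2[of N 0] \<open>0 < a\<close>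
      by (intro Chebyshev_inequality) (auto simp: square_integrable_real_iff)
    also have "\<dots> \<le> K / a\<^sup>2"
      using var\<^sub>N by (simp add: divide_right_mono)
    finally have "a\<^sup>2 < 2 * K"
      using \<open>0 < a\<close> by (simp add: field_simps)
    then show False
      using \<open>sqrt (2 * K) < a\<close> real_less_rsqrt by fastforce
  qed
  have "bounded (range (\<lambda>n. m\<^sub>N (n + R)))"
    using m\<^sub>N_bound by (intro boundedI[where B = "real R + sqrt (2 * K)"]) auto
  then obtain m r where "strict_mono r" and "(\<lambda>k. m\<^sub>N (r k + R)) \<longlonglongrightarrow> m"
    using bounded_imp_convergent_subsequence[of "\<lambda>n. m\<^sub>N (n + R)"] by (auto simp: o_def)
  define s where "s k = r k + R" for k
  have "strict_mono s"
    using \<open>strict_mono r\<close> by (simp add: strict_mono_def s_def)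
  have "(\<lambda>k. b\<^sub>N (s k) x - m\<^sub>N (s k)) \<longlonglongrightarrow> b x - m" for x
  proof -
    have "\<forall>\<^sub>F n in sequentially. b\<^sub>N n x = b x"
      using real_nat_ceiling_ge[of "\<bar>b x\<bar>"]
      by (auto simp: eventually_sequentially b\<^sub>N_def intro!: exI[of _ "nat \<lceil>\<bar>b x\<bar>\<rceil>"] truncation_eq)
    then have "(\<lambda>n. b\<^sub>N n x) \<longlonglongrightarrow> b x"
      by (rule tendsto_eventually)
    then show ?thesis
      using LIMSEQ_subseq_LIMSEQ[OF _ \<open>strict_mono s\<close>] \<open>(\<lambda>k. m\<^sub>N (r k + R)) \<longlonglongrightarrow> m\<close>
      by (auto simp: s_def o_def intro!: tendsto_diff)
  qed
  moreover have "integrable M (\<lambda>x. (b\<^sub>N N x - m\<^sub>N N)\<^sup>2)" for N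
    using b\<^sub>N_L2 by (simp add: square_integrable_real_iff)
  moreover have "(\<integral>x. (b\<^sub>N N x - m\<^sub>N N)\<^sup>2 \<partial>M) \<le> K" for N
    using var\<^sub>N by (simp add: m\<^sub>N_def)
  ultimately have "square_integrable M (\<lambda>x. b x - m)"
    by (intro square_integrable_pointwise_limit[where f = "\<lambda>k x. b\<^sub>N (s k) x - m\<^sub>N (s k)"]) auto
  then show ?thesis ..
qed

end

lemma spectral_gap_no_real_almost_invariant:
  fixes \<xi> :: "nat \<Rightarrow> 'a \<Rightarrow> real"
  assumes "spectral_gap G M T"
    and \<xi>_L2: "\<And>n. square_integrable M (\<xi> n)"
    and "\<And>n. (\<integral>x. (\<xi> n x)\<^sup>2 \<partial>M) = 1" and "\<And>n. (\<integral>x. \<xi> n x \<partial>M) = 0"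
    and "\<And>g. g \<in> carrier G \<Longrightarrow> (\<lambda>n. koopman_displacement G M T g (\<xi> n)) \<longlonglongrightarrow> 0"
  shows False
proof -
  define \<zeta> where "\<zeta> n x = complex_of_real (\<xi> n x)" for n x
  have "(cmod (koopman G T g (\<zeta> n) x - \<zeta> n x))\<^sup>2 = (koopman G T g (\<xi> n) x - \<xi> n x)\<^sup>2" for g n x
    unfolding \<zeta>_def koopman_def by (simp flip: of_real_diff)
  then have "(\<lambda>n. \<integral>x. (cmod (koopman G T g (\<zeta> n) x - \<zeta> n x))\<^sup>2 \<partial>M)
      = (\<lambda>n. koopman_displacement G M T g (\<xi> n))" for g
    by (simp add: koopman_displacement_def)
  moreover have "square_integrable M (\<zeta> n)" for n
  proof -
    have [measurable]: "\<xi> n \<in> borel_measurable M"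
      using \<xi>_L2 by (simp add: square_integrable_real_iff)
    have "\<zeta> n \<in> borel_measurable M"
      unfolding \<zeta>_def by measurable
    then show ?thesis
      using \<xi>_L2[of n] by (simp add: square_integrable_def \<zeta>_def)
  qed
  moreover have "(\<integral>x. (cmod (\<zeta> n x))\<^sup>2 \<partial>M) = 1" and "(\<integral>x. \<zeta> n x \<partial>M) = 0" for n
    using assms(3,4) by (simp_all add: \<zeta>_def)
  ultimately have "\<exists>\<zeta> :: nat \<Rightarrow> 'a \<Rightarrow> complex.
      (\<forall>n. square_integrable M (\<zeta> n) \<and> (\<integral>x. (cmod (\<zeta> n x))\<^sup>2 \<partial>M) = 1 \<and> (\<integral>x. \<zeta> n x \<partial>M) = 0) \<and>
      (\<forall>g\<in>carrier G. (\<lambda>n. \<integral>x. (cmod (koopman G T g (\<zeta> n) x - \<zeta> n x))\<^sup>2 \<partial>M) \<longlonglongrightarrow> 0)"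
    using assms(5) by (intro exI[of _ \<zeta>]) simp
  with assms(1) show False
    unfolding spectral_gap_def by (rule notE)
qed

lemma spectral_gap_no_almost_invariant_sequence:
  fixes enum :: "nat \<Rightarrow> 'g" and f :: "nat \<Rightarrow> 'a \<Rightarrow> real"
  assumes "prob_space M" and "spectral_gap G M T"
    and enum: "\<And>g. g \<in> carrier G \<Longrightarrow> \<exists>k. enum k = g"
    and f_L2: "\<And>n. square_integrable M (f n)"
    and f_gap: "\<And>n. (real n + 1) * (\<Sum>g\<in>enum ` {..n}. koopman_displacement G M T g (f n))
                      < prob_space.variance M (f n)"
  shows False
proof -
  interpret prob_space M by fact
  have var_pos: "0 < variance (f n)" for n
    by (rule order.strict_trans1[OF mult_nonneg_nonneg f_gap])
      (simp_all add: sum_nonneg koopman_displacement_nonneg)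
  define \<xi> where "\<xi> n = (\<lambda>x. (f n x - expectation (f n)) / sqrt (variance (f n)))" for n
  have "(\<lambda>n. koopman_displacement G M T g (\<xi> n)) \<longlonglongrightarrow> 0" if g: "g \<in> carrier G" for g
  proof -
    obtain k where "enum k = g"
      using enum[OF g] by blast
    have "koopman_displacement G M T g (\<xi> n) \<le> inverse (real (Suc n))" if "k \<le> n" for n
    proof -
      have "koopman_displacement G M T g (\<xi> n) = koopman_displacement G M T g (f n) / variance (f n)"
        unfolding \<xi>_def by (rule normalized_deviation(4)[OF f_L2 var_pos])
      also have "\<dots> \<le> (\<Sum>h\<in>enum ` {..n}. koopman_displacement G M T h (f n)) / variance (f n)"
        using \<open>enum k = g\<close> \<open>k \<le> n\<close> var_pos[of n]
        by (intro divide_right_mono member_le_sum koopman_displacement_nonneg) auto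
      also have "\<dots> \<le> inverse (real (Suc n))"
        using f_gap[of n] var_pos[of n] by (simp add: field_simps)
      finally show ?thesis .
    qed
    then show ?thesis
      by (intro tendsto_sandwich[OF _ _ tendsto_const LIMSEQ_inverse_real_of_nat])
        (auto simp: eventually_sequentially koopman_displacement_nonneg)
  qed
  then show False
    using spectral_gap_no_real_almost_invariant[OF assms(2), of \<xi>] var_pos
      normalized_deviation(1-3)[OF f_L2 var_pos]
    by (simp add: \<xi>_def)
qed

lemma spectral_gap_imp_poincare_inequality:
  fixes G :: "('g, 'b) monoid_scheme" and T :: "'g \<Rightarrow> 'a \<Rightarrow> 'a"
  assumes "prob_space M" and "countable (carrier G)" and "carrier G \<noteq> {}"
    and "spectral_gap G M T"
  obtains F C where "finite F" and "F \<subseteq> carrier G"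
    and "\<And>f. square_integrable M f \<Longrightarrow>
           prob_space.variance M f \<le> C * (\<Sum>g\<in>F. koopman_displacement G M T g f)"
proof -
  interpret prob_space M by fact
  define enum where "enum = from_nat_into (carrier G)"
  have enum_in: "enum k \<in> carrier G" for k
    unfolding enum_def using assms(3) by (rule from_nat_into)
  have enum_onto: "\<exists>k. enum k = g" if "g \<in> carrier G" for g
    unfolding enum_def using from_nat_into_surj[OF assms(2) that] by blast
  define D where "D n f = (\<Sum>g\<in>enum ` {..n}. koopman_displacement G M T g f)" for n f
  have "\<exists>n. \<forall>f. square_integrable M f \<longrightarrow> variance f \<le> (real n + 1) * D n f"
  proof (rule ccontr)
    assume "\<nexists>n. \<forall>f. square_integrable M f \<longrightarrow> variance f \<le> (real n + 1) * D n f"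
    then have "\<forall>n. \<exists>f. square_integrable M f \<and> (real n + 1) * D n f < variance f"
      by (auto simp: not_le)
    then obtain f where f_L2: "\<And>n. square_integrable M (f n)"
      and f_gap: "\<And>n. (real n + 1) * D n (f n) < variance (f n)"
      by metis
    show False
      by (rule spectral_gap_no_almost_invariant_sequence[OF assms(1,4) enum_onto f_L2 f_gap[unfolded D_def]])
  qed
  then obtain n where "\<And>f. square_integrable M f \<Longrightarrow> variance f \<le> (real n + 1) * D n f"
    by blast
  with enum_in show ?thesis
    by (intro that[of "enum ` {..n}" "real n + 1"]) (auto simp: D_def)
qed

lemma (in prob_space) variance_truncation_le:
  fixes b :: "'a \<Rightarrow> real" and c :: "'g \<Rightarrow> 'a \<Rightarrow> real"
  assumes [measurable]: "b \<in> borel_measurable M"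
    and poincare: "\<And>f. square_integrable M f \<Longrightarrow> variance f \<le> C * (\<Sum>g\<in>F. koopman_displacement G M T g f)"
    and coboundary: "\<And>g. g \<in> F \<Longrightarrow> AE x in M. c g x = koopman G T g b x - b x"
    and c_L2: "\<And>g. g \<in> F \<Longrightarrow> integrable M (\<lambda>x. (c g x)\<^sup>2)"
  shows "variance (\<lambda>x. truncation N (b x)) \<le> max 0 C * (\<Sum>g\<in>F. \<integral>x. (c g x)\<^sup>2 \<partial>M)"
proof -
  have "variance (\<lambda>x. truncation N (b x))
      \<le> C * (\<Sum>g\<in>F. koopman_displacement G M T g (\<lambda>x. truncation N (b x)))"
    by (intro poincare square_integrable_truncation) measurable
  also have "\<dots> \<le> max 0 C * (\<Sum>g\<in>F. koopman_displacement G M T g (\<lambda>x. truncation N (b x)))"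
    by (intro mult_right_mono sum_nonneg koopman_displacement_nonneg) simp
  also have "\<dots> \<le> max 0 C * (\<Sum>g\<in>F. \<integral>x. (c g x)\<^sup>2 \<partial>M)"
    using coboundary c_L2 by (intro mult_left_mono sum_mono koopman_displacement_truncation_le) auto
  finally show ?thesis .
qed

theorem theorem7p4:
  fixes G :: "('g, 'b) monoid_scheme" and M :: "'a measure" and T :: "'g \<Rightarrow> 'a \<Rightarrow> 'a"
    and c1 c2 :: "'g \<Rightarrow> 'a \<Rightarrow> real"
  assumes "countable (carrier G)"
    and "pmp_action G M T"
    and "spectral_gap G M T"
    and "L2_cocycle G M T c1" and "L2_cocycle G M T c2"
    and "L0_coboundary G M T (\<lambda>g x. c1 g x - c2 g x)"
  shows "L2_coboundary G M T (\<lambda>g x. c1 g x - c2 g x)"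
proof -
  have "group G" and "prob_space M"
    using assms(2) by (auto simp: pmp_action_def)
  interpret prob_space M by fact
  obtain b where b: "b \<in> borel_measurable M"
    and coboundary: "\<And>g. g \<in> carrier G \<Longrightarrow> AE x in M. c1 g x - c2 g x = koopman G T g b x - b x"
    using assms(6) by (auto simp: L0_coboundary_def)
  have c_L2: "integrable M (\<lambda>x. (c1 g x - c2 g x)\<^sup>2)" if "g \<in> carrier G" for g
    using square_integrable_diff[of M "c1 g" "c2 g"] assms(4,5) that
    by (simp add: L2_cocycle_def square_integrable_real_iff)
  have "carrier G \<noteq> {}"
    using group.is_monoid[OF \<open>group G\<close>] monoid.one_closed by blast
  then obtain F C where F: "F \<subseteq> carrier G"
    and poincare: "\<And>f. square_integrable M f \<Longrightarrow> variance f \<le> C * (\<Sum>g\<in>F. koopman_displacement G M T g f)"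
    by (rule spectral_gap_imp_poincare_inequality[OF prob_space_axioms assms(1) _ assms(3)]) blast
  have "variance (\<lambda>x. truncation N (b x)) \<le> max 0 C * (\<Sum>g\<in>F. \<integral>x. (c1 g x - c2 g x)\<^sup>2 \<partial>M)"
    for N :: nat
    by (rule variance_truncation_le[OF b poincare, where c = "\<lambda>g x. c1 g x - c2 g x"])
      (use F coboundary c_L2 in auto)
  then obtain m where "square_integrable M (\<lambda>x. b x - m)"
    by (rule bounded_truncated_variance_imp_square_integrable[OF b])
  moreover have "AE x in M. c1 g x - c2 g x = koopman G T g (\<lambda>x. b x - m) x - (b x - m)"
    if "g \<in> carrier G" for g
    using coboundary[OF that] by eventually_elim (simp add: koopman_def)
  ultimately show ?thesis
    unfolding L2_coboundary_def by blast
qed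

end
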